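(* For every $n$, there is a labeling scheme for $n\times n$ permutation matrices for dominance sum queries with labels of $O(\sqrt{n}\log n)$ bits: there is an encoder that, given any $n\times n$ permutation matrix $P$, assigns a label of $O(\sqrt{n}\log n)$ bits to each row and each column of $P$, and a decoder (depending only on $n$) that, given only the label of row $i$ and the label of column $j$, outputs $\sum_{i'\ge i,\,j'\ge j}P[i',j']$.
   Context: A permutation matrix here is a $0/1$ matrix in which every row and every column contains at most one entry equal to $1$. (Such matrices are used to represent unit-Monge matrices: for a permutation matrix $P$, the matrix $M[i,j]=\sum_{i'\ge i,j'\ge j}P[i',j']$ is unit-Monge.) *)

theory Defs
  imports Complex_Main
begin

definition perm_matrix :: "nat \<Rightarrow> (nat \<Rightarrow> nat \<Rightarrow> nat) \<Rightarrow> bool" where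
  "perm_matrix n P \<longleftrightarrow>
     (\<forall>i j. P i j \<in> {0, 1}) \<and>
     (\<forall>i j. (n \<le> i \<or> n \<le> j) \<longrightarrow> P i j = 0) \<and>
     (\<forall>i<n. card {j. j < n \<and> P i j = 1} \<le> 1) \<and>
     (\<forall>j<n. card {i. i < n \<and> P i j = 1} \<le> 1)"

definition dom_sum :: "nat \<Rightarrow> (nat \<Rightarrow> nat \<Rightarrow> nat) \<Rightarrow> nat \<Rightarrow> nat \<Rightarrow> nat" where
  "dom_sum n P i j = (\<Sum>i'\<in>{i..<n}. \<Sum>j'\<in>{j..<n}. P i' j')"

end

theory Submission
  imports Defs "HOL-Library.Log_Nat"
begin

text \<open>
  Cut the columns into blocks of \<open>b \<approx> \<surd>n\<close> consecutive columns. The label of row \<open>i\<close>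
  stores \<open>i\<close> and the \<open>O(\<surd>n)\<close> dominance sums of \<open>i\<close> at the left borders of the blocks; the
  label of column \<open>j\<close> stores \<open>j\<close> and, for the fewer than \<open>b\<close> columns \<open>c\<close> between the
  left border of its block and \<open>j\<close>, the row of the unique 1 in column \<open>c\<close>. The dominance sum
  at \<open>(i, j)\<close> is the stored sum at the block border minus the number of those columns whose
  1 lies in a row \<open>\<ge> i\<close>. All stored numbers are at most \<open>n\<close>, so each takes \<open>O(log n)\<close> bits.
\<close>

lemma perm_matrix_entry_01:
  assumes "perm_matrix n P"
  shows "P r c = 0 \<or> P r c = 1"
  using assms unfolding perm_matrix_def by blast

lemma perm_matrix_one_less:
  assumes "perm_matrix n P" "P r c = 1"
  shows "r < n" "c < n"
proof -
  have "n \<le> r \<or> n \<le> c \<longrightarrow> P r c = 0"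
    using assms(1) unfolding perm_matrix_def by blast
  with assms(2) show "r < n" "c < n" by auto
qed

lemma perm_matrix_column_unique:
  assumes "perm_matrix n P" "P r c = 1" "P r' c = 1"
  shows "r = r'"
proof -
  note less = perm_matrix_one_less[OF assms(1)]
  have "card {x. x < n \<and> P x c = 1} \<le> 1"
    using assms(1) less(2)[OF assms(2)] unfolding perm_matrix_def by blast
  then have "\<forall>x\<in>{x. x < n \<and> P x c = 1}. \<forall>y\<in>{x. x < n \<and> P x c = 1}. x = y"
    using card_le_Suc0_iff_eq[of "{x. x < n \<and> P x c = 1}"] by simp
  then show ?thesis
    using assms(2,3) less(1)[OF assms(2)] less(1)[OF assms(3)] by blast
qed

text \<open>Shifted by one so that \<open>0\<close> marks an empty column; then \<open>i < col_pos P c\<close> says that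
  the 1 of column \<open>c\<close> lies in a row \<open>\<ge> i\<close>.\<close>
definition col_pos :: "(nat \<Rightarrow> nat \<Rightarrow> nat) \<Rightarrow> nat \<Rightarrow> nat" where
  "col_pos P c = (if \<exists>r. P r c = 1 then Suc (THE r. P r c = 1) else 0)"

lemma col_pos_eq_Suc:
  assumes "perm_matrix n P" "P r c = 1"
  shows "col_pos P c = Suc r"
proof -
  have "(THE r. P r c = 1) = r"
    using assms(2) perm_matrix_column_unique[OF assms(1) _ assms(2)] by (rule the_equality)
  with assms(2) show ?thesis unfolding col_pos_def by auto
qed

lemma col_pos_le:
  assumes "perm_matrix n P"
  shows "col_pos P c \<le> n"
proof (cases "\<exists>r. P r c = 1")
  case True
  then obtain r where r: "P r c = 1" by blast
  then show ?thesis
    using col_pos_eq_Suc[OF assms r] perm_matrix_one_less(1)[OF assms r] by simp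
qed (simp add: col_pos_def)

lemma sum_column_from_row:
  assumes "perm_matrix n P"
  shows "(\<Sum>r\<in>{i..<n}. P r c) = of_bool (i < col_pos P c)"
proof (cases "\<exists>r. P r c = 1")
  case True
  then obtain r where r: "P r c = 1" by blast
  have "P r' c = (if r' = r then 1 else 0)" for r'
    using perm_matrix_entry_01[OF assms] perm_matrix_column_unique[OF assms _ r] r by metis
  then have "(\<Sum>r'\<in>{i..<n}. P r' c) = of_bool (r \<in> {i..<n})"
    by (simp add: sum.delta)
  then show ?thesis
    using perm_matrix_one_less(1)[OF assms r] col_pos_eq_Suc[OF assms r] by auto
next
  case False
  then have "P r c = 0" for r
    using perm_matrix_entry_01[OF assms] by blast
  then show ?thesis using False by (simp add: col_pos_def)
qed

lemma dom_sum_eq_column_count: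
  assumes "perm_matrix n P"
  shows "dom_sum n P i j = (\<Sum>c\<in>{j..<n}. of_bool (i < col_pos P c))"
proof -
  have "dom_sum n P i j = (\<Sum>c\<in>{j..<n}. \<Sum>r\<in>{i..<n}. P r c)"
    unfolding dom_sum_def by (rule sum.swap)
  then show ?thesis by (simp only: sum_column_from_row[OF assms])
qed

lemma dom_sum_le:
  assumes "perm_matrix n P"
  shows "dom_sum n P i j \<le> n"
proof -
  have "dom_sum n P i j \<le> (\<Sum>c\<in>{j..<n}. 1)"
    unfolding dom_sum_eq_column_count[OF assms] by (rule sum_mono) simp
  then show ?thesis by simp
qed

lemma dom_sum_split:
  assumes "perm_matrix n P" "a \<le> j" "j \<le> n"
  shows "dom_sum n P i a = (\<Sum>c\<in>{a..<j}. of_bool (i < col_pos P c)) + dom_sum n P i j"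
  by (simp only: dom_sum_eq_column_count[OF assms(1)] sum.atLeastLessThan_concat[OF assms(2,3), symmetric])

definition row_code :: "nat \<Rightarrow> nat \<Rightarrow> (nat \<Rightarrow> nat \<Rightarrow> nat) \<Rightarrow> nat \<Rightarrow> nat list" where
  "row_code n b P i = i # map (\<lambda>k. dom_sum n P i (k * b)) [0..<Suc (n div b)]"

definition col_code :: "nat \<Rightarrow> (nat \<Rightarrow> nat \<Rightarrow> nat) \<Rightarrow> nat \<Rightarrow> nat list" where
  "col_code b P j = j # map (col_pos P) [j - j mod b..<j]"

definition dom_decode :: "nat \<Rightarrow> nat list \<Rightarrow> nat list \<Rightarrow> nat" where
  "dom_decode b r c = r ! Suc (c ! 0 div b) - (\<Sum>t\<in>{0..<c ! 0 mod b}. of_bool (r ! 0 < c ! Suc t))"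

lemma length_row_code [simp]: "length (row_code n b P i) = n div b + 2"
  by (simp add: row_code_def)

lemma length_col_code [simp]: "length (col_code b P j) = Suc (j mod b)"
  by (simp add: col_code_def)

lemma row_code_le:
  assumes "perm_matrix n P" "i \<le> n" "x \<in> set (row_code n b P i)"
  shows "x \<le> n"
  using assms dom_sum_le[OF assms(1)] by (auto simp: row_code_def)

lemma col_code_le:
  assumes "perm_matrix n P" "j \<le> n" "x \<in> set (col_code b P j)"
  shows "x \<le> n"
  using assms col_pos_le[OF assms(1)] by (auto simp: col_code_def)

lemma dom_decode_codes:
  assumes "perm_matrix n P" "j \<le> n"
  shows "dom_decode b (row_code n b P i) (col_code b P j) = dom_sum n P i j"
proof -
  define a where "a = j - j mod b"
  have a: "a = j div b * b" "a \<le> j" "j - a = j mod b"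
    unfolding a_def by (simp_all add: minus_mod_eq_div_mult[symmetric])
  have "j div b < Suc (n div b)"
    using assms(2) by (simp add: div_le_mono le_imp_less_Suc)
  then have row_block: "row_code n b P i ! Suc (j div b) = dom_sum n P i a"
    using a(1) by (simp add: row_code_def del: upt_Suc)
  have col_window: "col_code b P j ! Suc t = col_pos P (a + t)" if "t < j - a" for t
    using that by (simp add: col_code_def a_def[symmetric])
  have "(\<Sum>t\<in>{0..<j mod b}. of_bool (i < col_code b P j ! Suc t))
      = (\<Sum>t\<in>{0..<j - a}. of_bool (i < col_pos P (a + t)))"
    using a(3) col_window by (intro sum.ivl_cong) simp_all
  also have "\<dots> = (\<Sum>c\<in>{a..<j}. of_bool (i < col_pos P c))"
    by (simp only: sum.atLeastLessThan_shift_0[of _ a j] comp_def)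
  finally have window: "(\<Sum>t\<in>{0..<j mod b}. of_bool (i < col_code b P j ! Suc t))
      = (\<Sum>c\<in>{a..<j}. of_bool (i < col_pos P c))" .
  have "row_code n b P i ! 0 = i" "col_code b P j ! 0 = j"
    by (simp_all add: row_code_def col_code_def)
  then have "dom_decode b (row_code n b P i) (col_code b P j)
      = dom_sum n P i a - (\<Sum>c\<in>{a..<j}. of_bool (i < col_pos P c))"
    by (simp only: dom_decode_def row_block window)
  also have "\<dots> = dom_sum n P i j"
    by (simp only: dom_sum_split[OF assms(1) a(2) assms(2)] diff_add_inverse)
  finally show ?thesis .
qed

fun nat_to_bits :: "nat \<Rightarrow> nat \<Rightarrow> bool list" where
  "nat_to_bits 0 x = []"
| "nat_to_bits (Suc w) x = odd x # nat_to_bits w (x div 2)"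

fun bits_to_nat :: "bool list \<Rightarrow> nat" where
  "bits_to_nat [] = 0"
| "bits_to_nat (b # bs) = of_bool b + 2 * bits_to_nat bs"

lemma length_nat_to_bits [simp]: "length (nat_to_bits w x) = w"
  by (induction w arbitrary: x) auto

lemma bits_to_nat_nat_to_bits:
  "x < 2 ^ w \<Longrightarrow> bits_to_nat (nat_to_bits w x) = x"
  by (induction w arbitrary: x) (auto simp: less_mult_imp_div_less)

definition encode_nats :: "nat \<Rightarrow> nat list \<Rightarrow> bool list" where
  "encode_nats w xs = concat (map (nat_to_bits w) xs)"

definition decode_nats :: "nat \<Rightarrow> bool list \<Rightarrow> nat list" where
  "decode_nats w bs = map (\<lambda>t. bits_to_nat (take w (drop (t * w) bs))) [0..<length bs div w]"

lemma length_encode_nats [simp]: "length (encode_nats w xs) = w * length xs"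
  by (induction xs) (simp_all add: encode_nats_def)

lemma take_drop_encode_nats:
  "t < length xs \<Longrightarrow> take w (drop (t * w) (encode_nats w xs)) = nat_to_bits w (xs ! t)"
proof (induction xs arbitrary: t)
  case (Cons x xs)
  then show ?case by (cases t) (simp_all add: encode_nats_def)
qed simp

lemma decode_encode_nats:
  assumes "0 < w" "\<forall>x\<in>set xs. x < 2 ^ w"
  shows "decode_nats w (encode_nats w xs) = xs"
  using assms
  by (intro nth_equalityI) (simp_all add: decode_nats_def take_drop_encode_nats bits_to_nat_nat_to_bits)

definition block_size :: "nat \<Rightarrow> nat" where
  "block_size n = nat \<lceil>sqrt (real n)\<rceil>"

definition row_label :: "nat \<Rightarrow> (nat \<Rightarrow> nat \<Rightarrow> nat) \<Rightarrow> nat \<Rightarrow> bool list" where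
  "row_label n P i = encode_nats (floorlog 2 n) (row_code n (block_size n) P i)"

definition col_label :: "nat \<Rightarrow> (nat \<Rightarrow> nat \<Rightarrow> nat) \<Rightarrow> nat \<Rightarrow> bool list" where
  "col_label n P j = encode_nats (floorlog 2 n) (col_code (block_size n) P j)"

definition dom_label_decode :: "nat \<Rightarrow> bool list \<Rightarrow> bool list \<Rightarrow> nat" where
  "dom_label_decode n rl cl =
     dom_decode (block_size n) (decode_nats (floorlog 2 n) rl) (decode_nats (floorlog 2 n) cl)"

lemma dom_label_decode_labels:
  assumes "perm_matrix n P" "i < n" "j < n"
  shows "dom_label_decode n (row_label n P i) (col_label n P j) = dom_sum n P i j"
proof -
  have "0 < n" using assms(2) by simp
  then have width: "0 < floorlog 2 n" "n < 2 ^ floorlog 2 n"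
    using floorlog_bounds[of n 2] by (simp_all add: floorlog_def)
  have "\<forall>x\<in>set (row_code n (block_size n) P i). x < 2 ^ floorlog 2 n"
    using row_code_le[OF assms(1) less_imp_le[OF assms(2)]] width(2) by (blast intro: le_less_trans)
  moreover have "\<forall>x\<in>set (col_code (block_size n) P j). x < 2 ^ floorlog 2 n"
    using col_code_le[OF assms(1) less_imp_le[OF assms(3)]] width(2) by (blast intro: le_less_trans)
  ultimately show ?thesis
    using assms dom_decode_codes
    by (simp add: dom_label_decode_def row_label_def col_label_def decode_encode_nats[OF width(1)])
qed

lemma floorlog_2_le_log:
  assumes "2 \<le> n"
  shows "real (floorlog 2 n) \<le> 2 * log 2 (real n)"
proof -
  have "1 \<le> log 2 (real n)"
    using assms by simp
  moreover have "real (floorlog 2 n) = of_int \<lfloor>log 2 (real n)\<rfloor> + 1"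
    using assms \<open>1 \<le> log 2 (real n)\<close> by (simp add: floorlog_def)
  ultimately show ?thesis by linarith
qed

lemma block_size_pos: "0 < n \<Longrightarrow> 0 < block_size n"
  by (simp add: block_size_def)

lemma block_size_le:
  assumes "1 \<le> n"
  shows "real (block_size n) \<le> 2 * sqrt (real n)"
proof -
  have "1 \<le> sqrt (real n)" using assms by simp
  then show ?thesis unfolding block_size_def by linarith
qed

lemma div_block_size_le: "real (n div block_size n) \<le> sqrt (real n)"
proof (cases "n = 0")
  case False
  have "real (n div block_size n) \<le> real n / real (block_size n)"
    by (rule of_nat_div_le_of_nat)
  also have "\<dots> \<le> real n / sqrt (real n)"
    using False by (intro divide_left_mono) (simp_all add: block_size_def)
  also have "\<dots> = sqrt (real n)"
    by (simp add: real_div_sqrt)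
  finally show ?thesis .
qed simp

lemma length_row_label_le:
  assumes "2 \<le> n"
  shows "real (length (row_label n P i)) \<le> 6 * sqrt (real n) * log 2 (real n)"
proof -
  have "1 \<le> sqrt (real n)"
    using assms by simp
  then have "real (n div block_size n) + 2 \<le> 3 * sqrt (real n)"
    using div_block_size_le[of n] by linarith
  then have "real (floorlog 2 n) * (real (n div block_size n) + 2) \<le> (2 * log 2 (real n)) * (3 * sqrt (real n))"
    using floorlog_2_le_log[OF assms] by (intro mult_mono) simp_all
  then show ?thesis
    by (simp add: row_label_def algebra_simps)
qed

lemma length_col_label_le:
  assumes "2 \<le> n"
  shows "real (length (col_label n P j)) \<le> 6 * sqrt (real n) * log 2 (real n)"
proof -
  have "real (Suc (j mod block_size n)) \<le> real (block_size n)"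
    using block_size_pos[of n] assms by (simp only: of_nat_le_iff Suc_le_eq) simp
  also have "\<dots> \<le> 2 * sqrt (real n)"
    using assms by (intro block_size_le) simp
  finally have "real (floorlog 2 n) * real (Suc (j mod block_size n)) \<le> (2 * log 2 (real n)) * (3 * sqrt (real n))"
    using floorlog_2_le_log[OF assms] by (intro mult_mono) simp_all
  then show ?thesis
    by (simp add: col_label_def algebra_simps)
qed

theorem lemma15:
  shows "\<exists>C::real. C > 0 \<and> (\<forall>n::nat. n \<ge> 2 \<longrightarrow>
    (\<exists>(rowlab :: (nat \<Rightarrow> nat \<Rightarrow> nat) \<Rightarrow> nat \<Rightarrow> bool list)
      (collab :: (nat \<Rightarrow> nat \<Rightarrow> nat) \<Rightarrow> nat \<Rightarrow> bool list)
      (dec :: bool list \<Rightarrow> bool list \<Rightarrow> nat).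
      \<forall>P. perm_matrix n P \<longrightarrow>
        (\<forall>i<n. real (length (rowlab P i)) \<le> C * sqrt (real n) * log 2 (real n)) \<and>
        (\<forall>j<n. real (length (collab P j)) \<le> C * sqrt (real n) * log 2 (real n)) \<and>
        (\<forall>i<n. \<forall>j<n. dec (rowlab P i) (collab P j) = dom_sum n P i j)))"
proof (intro exI[of _ 6] conjI allI impI)
  fix n :: nat
  assume n: "2 \<le> n"
  show "\<exists>rowlab collab (dec :: bool list \<Rightarrow> bool list \<Rightarrow> nat). \<forall>P. perm_matrix n P \<longrightarrow>
        (\<forall>i<n. real (length (rowlab P i)) \<le> 6 * sqrt (real n) * log 2 (real n)) \<and>
        (\<forall>j<n. real (length (collab P j)) \<le> 6 * sqrt (real n) * log 2 (real n)) \<and>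
        (\<forall>i<n. \<forall>j<n. dec (rowlab P i) (collab P j) = dom_sum n P i j)"
    using n length_row_label_le length_col_label_le dom_label_decode_labels
    by (intro exI[where x = "row_label n"] exI[where x = "col_label n"] exI[where x = "dom_label_decode n"]) blast
qed simp

end
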